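(* Let $T\ge1$ and consider the MDP with states $\{1,2\}$ defined as follows. In state 1 there are two actions: action "up" gives reward $1$ and moves to state 1 with probability $1-\frac1T$ and to state 2 with probability $\frac1T$; action "down" gives reward $\frac12$ and moves to state 2 deterministically. In state 2 there is a single action, giving reward $\frac12$ and staying in state 2. Then $\|h^\star\|_{\mathrm{sp}}=\frac T2$ and $\inf_{\pi:\rho^\pi=\rho^\star}\|h^\pi\|_{\mathrm{sp}}=0$.
   Context: Policies are stationary Markovian. Gain $\rho^\pi(s)=\lim_T\frac1T\mathbb{E}^\pi_s[\sum_{t<T}r(S_t,A_t)]$, $\rho^\star=\sup_\pi\rho^\pi$; bias $h^\pi(s)=\mathrm{C}\text{-}\lim_T\mathbb{E}^\pi_s[\sum_{t<T}(r(S_t,A_t)-\rho^\pi(S_t))]$; $h^\star$ is the bias of a Blackwell-optimal policy (a policy optimal for the $\gamma$-discounted problem for all $\gamma$ sufficiently close to 1). $\|x\|_{\mathrm{sp}}=\max x-\min x$. *)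

theory Defs
  imports Complex_Main
begin

text \<open>Generic finite MDP: state set S, admissible actions A s, reward r s a,
transition probabilities P s a s'. A stationary Markovian (possibly randomized)
policy \<pi> assigns to each state s a probability distribution \<pi> s over A s.\<close>

definition is_policy :: "'s set \<Rightarrow> ('s \<Rightarrow> 'a set) \<Rightarrow> ('s \<Rightarrow> 'a \<Rightarrow> real) \<Rightarrow> bool" where
  "is_policy S A \<pi> \<longleftrightarrow> (\<forall>s\<in>S. (\<forall>a\<in>A s. 0 \<le> \<pi> s a) \<and> (\<Sum>a\<in>A s. \<pi> s a) = 1)"

definition Ppi :: "('s \<Rightarrow> 'a set) \<Rightarrow> ('s \<Rightarrow> 'a \<Rightarrow> 's \<Rightarrow> real) \<Rightarrow> ('s \<Rightarrow> 'a \<Rightarrow> real) \<Rightarrow> 's \<Rightarrow> 's \<Rightarrow> real" where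
  "Ppi A P \<pi> s s' = (\<Sum>a\<in>A s. \<pi> s a * P s a s')"

definition rpi :: "('s \<Rightarrow> 'a set) \<Rightarrow> ('s \<Rightarrow> 'a \<Rightarrow> real) \<Rightarrow> ('s \<Rightarrow> 'a \<Rightarrow> real) \<Rightarrow> 's \<Rightarrow> real" where
  "rpi A r \<pi> s = (\<Sum>a\<in>A s. \<pi> s a * r s a)"

text \<open>nstep ... n s u = Pr^pi_s[S_n = u]\<close>
primrec nstep :: "'s set \<Rightarrow> ('s \<Rightarrow> 'a set) \<Rightarrow> ('s \<Rightarrow> 'a \<Rightarrow> 's \<Rightarrow> real) \<Rightarrow> ('s \<Rightarrow> 'a \<Rightarrow> real) \<Rightarrow> nat \<Rightarrow> 's \<Rightarrow> 's \<Rightarrow> real" where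
  "nstep S A P \<pi> 0 s u = (if u = s then 1 else 0)"
| "nstep S A P \<pi> (Suc n) s u = (\<Sum>v\<in>S. nstep S A P \<pi> n s v * Ppi A P \<pi> v u)"

text \<open>E^pi_s[r(S_t,A_t)]\<close>
definition exp_reward :: "'s set \<Rightarrow> ('s \<Rightarrow> 'a set) \<Rightarrow> ('s \<Rightarrow> 'a \<Rightarrow> real) \<Rightarrow> ('s \<Rightarrow> 'a \<Rightarrow> 's \<Rightarrow> real) \<Rightarrow> ('s \<Rightarrow> 'a \<Rightarrow> real) \<Rightarrow> nat \<Rightarrow> 's \<Rightarrow> real" where
  "exp_reward S A r P \<pi> t s = (\<Sum>u\<in>S. nstep S A P \<pi> t s u * rpi A r \<pi> u)"

definition gain :: "'s set \<Rightarrow> ('s \<Rightarrow> 'a set) \<Rightarrow> ('s \<Rightarrow> 'a \<Rightarrow> real) \<Rightarrow> ('s \<Rightarrow> 'a \<Rightarrow> 's \<Rightarrow> real) \<Rightarrow> ('s \<Rightarrow> 'a \<Rightarrow> real) \<Rightarrow> 's \<Rightarrow> real" where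
  "gain S A r P \<pi> s = lim (\<lambda>T. (\<Sum>t<T. exp_reward S A r P \<pi> t s) / real T)"

text \<open>optimal gain rho^*(s) = sup over stationary Markovian policies\<close>
definition opt_gain :: "'s set \<Rightarrow> ('s \<Rightarrow> 'a set) \<Rightarrow> ('s \<Rightarrow> 'a \<Rightarrow> real) \<Rightarrow> ('s \<Rightarrow> 'a \<Rightarrow> 's \<Rightarrow> real) \<Rightarrow> 's \<Rightarrow> real" where
  "opt_gain S A r P s = (SUP \<pi>\<in>{\<pi>. is_policy S A \<pi>}. gain S A r P \<pi> s)"

definition cesaro_lim :: "(nat \<Rightarrow> real) \<Rightarrow> real" where
  "cesaro_lim x = lim (\<lambda>N. (\<Sum>n<N. x n) / real N)"

definition bias :: "'s set \<Rightarrow> ('s \<Rightarrow> 'a set) \<Rightarrow> ('s \<Rightarrow> 'a \<Rightarrow> real) \<Rightarrow> ('s \<Rightarrow> 'a \<Rightarrow> 's \<Rightarrow> real) \<Rightarrow> ('s \<Rightarrow> 'a \<Rightarrow> real) \<Rightarrow> 's \<Rightarrow> real" where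
  "bias S A r P \<pi> s = cesaro_lim (\<lambda>T. \<Sum>t<T. exp_reward S A r P \<pi> t s
      - (\<Sum>u\<in>S. nstep S A P \<pi> t s u * gain S A r P \<pi> u))"

definition disc_value :: "'s set \<Rightarrow> ('s \<Rightarrow> 'a set) \<Rightarrow> ('s \<Rightarrow> 'a \<Rightarrow> real) \<Rightarrow> ('s \<Rightarrow> 'a \<Rightarrow> 's \<Rightarrow> real) \<Rightarrow> real \<Rightarrow> ('s \<Rightarrow> 'a \<Rightarrow> real) \<Rightarrow> 's \<Rightarrow> real" where
  "disc_value S A r P \<gamma> \<pi> s = (\<Sum>t. \<gamma> ^ t * exp_reward S A r P \<pi> t s)"

definition blackwell_optimal :: "'s set \<Rightarrow> ('s \<Rightarrow> 'a set) \<Rightarrow> ('s \<Rightarrow> 'a \<Rightarrow> real) \<Rightarrow> ('s \<Rightarrow> 'a \<Rightarrow> 's \<Rightarrow> real) \<Rightarrow> ('s \<Rightarrow> 'a \<Rightarrow> real) \<Rightarrow> bool" where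
  "blackwell_optimal S A r P \<pi> \<longleftrightarrow> is_policy S A \<pi> \<and>
     (\<exists>\<gamma>0<1. \<forall>\<gamma>. \<gamma>0 < \<gamma> \<and> \<gamma> < 1 \<longrightarrow>
        (\<forall>\<pi>'. is_policy S A \<pi>' \<longrightarrow> (\<forall>s\<in>S. disc_value S A r P \<gamma> \<pi>' s \<le> disc_value S A r P \<gamma> \<pi> s)))"

definition span :: "'s set \<Rightarrow> ('s \<Rightarrow> real) \<Rightarrow> real" where
  "span S f = Max (f ` S) - Min (f ` S)"

text \<open>The concrete two-state MDP. States 1, 2. In state 1: action 0 = "up",
action 1 = "down". In state 2: single action 0.\<close>
definition exS :: "nat set" where "exS = {1, 2}"

definition exA :: "nat \<Rightarrow> nat set" where
  "exA s = (if s = 1 then {0, 1} else {0})"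

definition exr :: "nat \<Rightarrow> nat \<Rightarrow> real" where
  "exr s a = (if s = 1 \<and> a = 0 then 1 else 1/2)"

definition exP :: "real \<Rightarrow> nat \<Rightarrow> nat \<Rightarrow> nat \<Rightarrow> real" where
  "exP T s a s' =
     (if s = 1 \<and> a = 0 then (if s' = 1 then 1 - 1/T else if s' = 2 then 1/T else 0)
      else (if s' = 2 then 1 else 0))"

end

theory Submission imports Defs begin

text \<open>Write \<open>p\<close> for the probability with which a policy plays "up" in state 1, and
\<open>q = p (1 - 1/T)\<close> for the probability of staying in state 1 for one step. Started in
state 1, the chain is still there at time \<open>t\<close> with probability \<open>q\<^sup>t\<close>, so the expected
reward is \<open>1/2 + (p/2) q\<^sup>t\<close>. Hence every policy has gain \<open>1/2\<close> everywhere, the bias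
is \<open>(p/2)/(1 - q)\<close> in state 1 and \<open>0\<close> in state 2, and the \<open>\<gamma>\<close>-discounted value in
state 1 is \<open>1/(2(1 - \<gamma>)) + (p/2)/(1 - \<gamma> q)\<close>. Since \<open>p \<mapsto> p/(1 - a p)\<close> is strictly
increasing, the Blackwell-optimal policies are exactly those with \<open>p = 1\<close>, whose bias
span is \<open>(1/2)/(1/T) = T/2\<close>; the gain-optimal policy with \<open>p = 0\<close> has bias span \<open>0\<close>.\<close>

lemma averages_const_plus_summable_tendsto:
  fixes c :: real
  assumes "summable x"
  shows "(\<lambda>N. (\<Sum>t<N. c + x t) / real N) \<longlonglongrightarrow> c"
proof -
  have "(\<lambda>N. c + (\<Sum>t<N. x t) * inverse (real N)) \<longlonglongrightarrow> c + suminf x * 0"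
    by (intro tendsto_intros summable_LIMSEQ assms lim_inverse_n)
  moreover have "\<forall>\<^sub>F N in sequentially.
      c + (\<Sum>t<N. x t) * inverse (real N) = (\<Sum>t<N. c + x t) / real N"
    using eventually_gt_at_top[of "0::nat"]
    by eventually_elim (simp add: sum.distrib field_simps)
  ultimately show ?thesis
    by (simp add: Lim_transform_eventually)
qed

lemma summable_scaled_geometric:
  fixes q :: real
  assumes "\<bar>q\<bar> < 1"
  shows "summable (\<lambda>t. d * q ^ t)"
  using assms by (intro summable_mult summable_geometric) simp

lemma strict_mono_on_div_one_minus:
  fixes a :: real
  assumes "0 \<le> a" "a < 1"
  shows "strict_mono_on {0..1} (\<lambda>p. p / (1 - a * p))"
proof (rule strict_mono_onI)
  fix p p' :: real
  assume "p \<in> {0..1}" "p' \<in> {0..1}" "p < p'"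
  moreover have "a * p \<le> a" "a * p' \<le> a" if "p \<in> {0..1}" "p' \<in> {0..1}"
    using that assms by (auto intro: mult_left_le)
  ultimately have "0 < 1 - a * p" "0 < 1 - a * p'" "p * (1 - a * p') < p' * (1 - a * p)"
    using assms by (auto simp: algebra_simps)
  then show "p / (1 - a * p) < p' / (1 - a * p')"
    by (simp add: divide_simps)
qed

(* The simplifier must not turn state 1 into Suc 0, or the lemmas below stop matching. *)
declare One_nat_def [simp del]

lemma sum_exS: "(\<Sum>u\<in>exS. f u) = f 1 + f 2"
  by (simp add: exS_def)

lemma span_exS: "span exS f = \<bar>f 1 - f 2\<bar>"
  by (simp add: span_def exS_def)

lemma is_policy_exS:
  assumes "is_policy exS exA \<pi>"
  shows "\<pi> 2 0 = 1" "\<pi> 1 1 = 1 - \<pi> 1 0" "0 \<le> \<pi> 1 0" "\<pi> 1 0 \<le> 1"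
  using assms unfolding is_policy_def exS_def exA_def by auto

definition stay_prob :: "real \<Rightarrow> (nat \<Rightarrow> nat \<Rightarrow> real) \<Rightarrow> real" where
  "stay_prob T \<pi> = \<pi> 1 0 * (1 - 1/T)"

lemma stay_prob_bounds:
  assumes "T \<ge> 1" "is_policy exS exA \<pi>"
  shows "0 \<le> stay_prob T \<pi>" "stay_prob T \<pi> < 1"
proof -
  have "0 \<le> 1 - 1/T" "1 - 1/T < 1"
    using assms(1) by (auto simp: field_simps)
  moreover have "\<pi> 1 0 * (1 - 1/T) \<le> 1 - 1/T"
    using calculation is_policy_exS[OF assms(2)] by (simp add: mult_left_le_one_le)
  ultimately show "0 \<le> stay_prob T \<pi>" "stay_prob T \<pi> < 1"
    using is_policy_exS(3)[OF assms(2)] unfolding stay_prob_def by (simp, linarith)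
qed

lemma Ppi_exS:
  assumes "is_policy exS exA \<pi>"
  shows "Ppi exA (exP T) \<pi> 1 1 = stay_prob T \<pi>"
    "Ppi exA (exP T) \<pi> 1 2 = 1 - stay_prob T \<pi>"
    "Ppi exA (exP T) \<pi> 2 1 = 0"
    "Ppi exA (exP T) \<pi> 2 2 = 1"
  using is_policy_exS[OF assms]
  unfolding Ppi_def exA_def exP_def stay_prob_def by (auto simp: algebra_simps)

lemma nstep_exS:
  assumes "is_policy exS exA \<pi>"
  shows "nstep exS exA (exP T) \<pi> n 1 1 = stay_prob T \<pi> ^ n
    \<and> nstep exS exA (exP T) \<pi> n 1 2 = 1 - stay_prob T \<pi> ^ n
    \<and> nstep exS exA (exP T) \<pi> n 2 1 = 0 \<and> nstep exS exA (exP T) \<pi> n 2 2 = 1"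
  by (induction n) (simp_all add: sum_exS Ppi_exS[OF assms] algebra_simps)

lemma rpi_exS:
  assumes "is_policy exS exA \<pi>"
  shows "rpi exA exr \<pi> 1 = 1/2 + \<pi> 1 0 / 2" "rpi exA exr \<pi> 2 = 1/2"
  using is_policy_exS[OF assms] unfolding rpi_def exA_def exr_def by (auto simp: algebra_simps)

lemma exp_reward_exS:
  assumes "is_policy exS exA \<pi>"
  shows "exp_reward exS exA exr (exP T) \<pi> t 1 = 1/2 + \<pi> 1 0 / 2 * stay_prob T \<pi> ^ t"
    "exp_reward exS exA exr (exP T) \<pi> t 2 = 1/2"
  using nstep_exS[OF assms, of T t]
  by (simp_all add: exp_reward_def sum_exS rpi_exS[OF assms] algebra_simps)

lemma gain_exS:
  assumes "T \<ge> 1" "is_policy exS exA \<pi>" "s \<in> exS"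
  shows "gain exS exA exr (exP T) \<pi> s = 1/2"
proof -
  have "\<bar>stay_prob T \<pi>\<bar> < 1"
    using stay_prob_bounds[OF assms(1,2)] by simp
  consider "s = 1" | "s = 2"
    using assms(3) by (auto simp: exS_def)
  then have "(\<lambda>N. (\<Sum>t<N. exp_reward exS exA exr (exP T) \<pi> t s) / real N) \<longlonglongrightarrow> 1/2"
  proof cases
    case 1
    show ?thesis
      unfolding 1 exp_reward_exS[OF assms(2)]
      by (intro averages_const_plus_summable_tendsto summable_scaled_geometric) fact
  next
    case 2
    show ?thesis
      using averages_const_plus_summable_tendsto[of "\<lambda>_. 0" "1/2"]
      unfolding 2 exp_reward_exS[OF assms(2)] by simp
  qed
  then show ?thesis
    unfolding gain_def by (rule limI)
qed

lemma bias_exS: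
  assumes "T \<ge> 1" "is_policy exS exA \<pi>"
  shows "bias exS exA exr (exP T) \<pi> 1 = (\<pi> 1 0 / 2) / (1 - stay_prob T \<pi>)"
    "bias exS exA exr (exP T) \<pi> 2 = 0"
proof -
  define q where "q = stay_prob T \<pi>"
  define b where "b = (\<pi> 1 0 / 2) / (1 - q)"
  have q: "0 \<le> q" "q < 1"
    using stay_prob_bounds[OF assms] unfolding q_def by auto
  have gain: "gain exS exA exr (exP T) \<pi> 1 = 1/2" "gain exS exA exr (exP T) \<pi> 2 = 1/2"
    using gain_exS[OF assms] by (simp_all add: exS_def)
  have excess_reward: "exp_reward exS exA exr (exP T) \<pi> t 1
      - (\<Sum>u\<in>exS. nstep exS exA (exP T) \<pi> t 1 u * gain exS exA exr (exP T) \<pi> u)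
      = \<pi> 1 0 / 2 * q ^ t" for t
    using nstep_exS[OF assms(2), of T t]
    by (simp add: sum_exS gain exp_reward_exS[OF assms(2)] q_def algebra_simps)
  have partial_sum: "(\<Sum>t<N. \<pi> 1 0 / 2 * q ^ t) = b + (- b) * q ^ N" for N
  proof -
    have "(\<Sum>t<N. \<pi> 1 0 / 2 * q ^ t) = \<pi> 1 0 / 2 * (\<Sum>t<N. q ^ t)"
      by (simp add: sum_distrib_left)
    also have "\<dots> = \<pi> 1 0 / 2 * ((1 - q ^ N) / (1 - q))"
      using q sum_gp_strict[of q N] by simp
    also have "\<dots> = b + (- b) * q ^ N"
      by (simp add: b_def diff_divide_distrib right_diff_distrib)
    finally show ?thesis .
  qed
  have "(\<lambda>N. (\<Sum>n<N. b + (- b) * q ^ n) / real N) \<longlonglongrightarrow> b"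
    using q by (intro averages_const_plus_summable_tendsto summable_scaled_geometric) simp
  then have "bias exS exA exr (exP T) \<pi> 1 = b"
    unfolding bias_def cesaro_lim_def excess_reward partial_sum by (rule limI)
  then show "bias exS exA exr (exP T) \<pi> 1 = (\<pi> 1 0 / 2) / (1 - stay_prob T \<pi>)"
    unfolding b_def q_def .
  have "exp_reward exS exA exr (exP T) \<pi> t 2
      - (\<Sum>u\<in>exS. nstep exS exA (exP T) \<pi> t 2 u * gain exS exA exr (exP T) \<pi> u) = 0" for t
    using nstep_exS[OF assms(2), of T t]
    by (simp add: sum_exS gain exp_reward_exS[OF assms(2)])
  then show "bias exS exA exr (exP T) \<pi> 2 = 0"
    using averages_const_plus_summable_tendsto[of "\<lambda>_. 0" 0]
    unfolding bias_def cesaro_lim_def by (simp add: limI)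
qed

lemma disc_value_exS:
  assumes "T \<ge> 1" "is_policy exS exA \<pi>" "0 \<le> \<gamma>" "\<gamma> < 1"
  shows "disc_value exS exA exr (exP T) \<gamma> \<pi> 1
      = (1/2) / (1 - \<gamma>) + (\<pi> 1 0 / 2) / (1 - \<gamma> * stay_prob T \<pi>)"
    "disc_value exS exA exr (exP T) \<gamma> \<pi> 2 = (1/2) / (1 - \<gamma>)"
proof -
  define q where "q = stay_prob T \<pi>"
  have "0 \<le> q" "q < 1"
    using stay_prob_bounds[OF assms(1,2)] unfolding q_def by auto
  moreover have "\<gamma> * q \<le> q"
    using \<open>0 \<le> q\<close> assms(3,4) by (simp add: mult_left_le_one_le)
  ultimately have "\<bar>\<gamma> * q\<bar> < 1"
    using assms(3) by simp
  then have discounted_bonus: "(\<lambda>t. \<pi> 1 0 / 2 * (\<gamma> * q) ^ t) sums ((\<pi> 1 0 / 2) / (1 - \<gamma> * q))"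
    using sums_mult[OF geometric_sums, of "\<gamma> * q" "\<pi> 1 0 / 2"] by simp
  have discounted_base: "(\<lambda>t. 1/2 * \<gamma> ^ t) sums ((1/2) / (1 - \<gamma>))"
    using assms(3,4) sums_mult[OF geometric_sums, of \<gamma> "1/2"] by simp
  have "(\<lambda>t. \<gamma> ^ t * exp_reward exS exA exr (exP T) \<pi> t 1)
      = (\<lambda>t. 1/2 * \<gamma> ^ t + \<pi> 1 0 / 2 * (\<gamma> * q) ^ t)"
    by (simp add: exp_reward_exS[OF assms(2)] q_def power_mult_distrib algebra_simps)
  with sums_add[OF discounted_base discounted_bonus]
  show "disc_value exS exA exr (exP T) \<gamma> \<pi> 1
      = (1/2) / (1 - \<gamma>) + (\<pi> 1 0 / 2) / (1 - \<gamma> * stay_prob T \<pi>)"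
    unfolding disc_value_def q_def by (simp add: sums_iff)
  show "disc_value exS exA exr (exP T) \<gamma> \<pi> 2 = (1/2) / (1 - \<gamma>)"
    using discounted_base
    by (simp add: disc_value_def exp_reward_exS[OF assms(2)] sums_iff mult.commute)
qed

definition up_policy :: "nat \<Rightarrow> nat \<Rightarrow> real" where
  "up_policy s a = of_bool (a = 0)"

definition down_policy :: "nat \<Rightarrow> nat \<Rightarrow> real" where
  "down_policy s a = (if s = 1 then of_bool (a = 1) else of_bool (a = 0))"

lemma is_policy_up_policy: "is_policy exS exA up_policy"
  and is_policy_down_policy: "is_policy exS exA down_policy"
  by (auto simp: is_policy_def exS_def exA_def up_policy_def down_policy_def)

lemma up_policy_maximizes_disc_value_state1:
  assumes "T \<ge> 1" "is_policy exS exA \<pi>" "0 \<le> \<gamma>" "\<gamma> < 1"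
  shows "disc_value exS exA exr (exP T) \<gamma> \<pi> 1 \<le> disc_value exS exA exr (exP T) \<gamma> up_policy 1"
    "\<pi> 1 0 < 1 \<Longrightarrow>
      disc_value exS exA exr (exP T) \<gamma> \<pi> 1 < disc_value exS exA exr (exP T) \<gamma> up_policy 1"
proof -
  define a where "a = \<gamma> * (1 - 1/T)"
  have "0 \<le> 1 - 1/T" "1 - 1/T \<le> 1"
    using assms(1) by (auto simp: field_simps)
  then have "0 \<le> a" "a \<le> \<gamma>"
    using assms(3) unfolding a_def by (auto intro: mult_left_le)
  then have "0 \<le> a" "a < 1"
    using assms(4) by auto
  note mono = strict_mono_on_div_one_minus[OF this]
  have state1_value: "disc_value exS exA exr (exP T) \<gamma> \<pi>' 1
      = (1/2) / (1 - \<gamma>) + (\<pi>' 1 0 / (1 - a * \<pi>' 1 0)) / 2"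
    if "is_policy exS exA \<pi>'" for \<pi>'
    by (simp add: disc_value_exS[OF assms(1) that assms(3,4)] stay_prob_def a_def algebra_simps)
  have p: "\<pi> 1 0 \<in> {0..1}"
    using is_policy_exS[OF assms(2)] by simp
  have up: "up_policy 1 0 = 1" and one: "(1::real) \<in> {0..1}"
    by (simp_all add: up_policy_def)
  show "disc_value exS exA exr (exP T) \<gamma> \<pi> 1 \<le> disc_value exS exA exr (exP T) \<gamma> up_policy 1"
    using strict_mono_on_leD[OF mono p one is_policy_exS(4)[OF assms(2)]]
    unfolding state1_value[OF assms(2)] state1_value[OF is_policy_up_policy] up
    by (intro add_left_mono divide_right_mono) auto
  show "disc_value exS exA exr (exP T) \<gamma> \<pi> 1 < disc_value exS exA exr (exP T) \<gamma> up_policy 1"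
    if "\<pi> 1 0 < 1"
    using strict_mono_onD[OF mono p one that]
    unfolding state1_value[OF assms(2)] state1_value[OF is_policy_up_policy] up
    by (intro add_strict_left_mono divide_strict_right_mono) auto
qed

lemma blackwell_optimal_up_policy:
  assumes "T \<ge> 1"
  shows "blackwell_optimal exS exA exr (exP T) up_policy"
proof -
  have "disc_value exS exA exr (exP T) \<gamma> \<pi> s \<le> disc_value exS exA exr (exP T) \<gamma> up_policy s"
    if "is_policy exS exA \<pi>" "0 < \<gamma>" "\<gamma> < 1" "s \<in> exS" for \<pi> \<gamma> s
    using that up_policy_maximizes_disc_value_state1(1)[OF assms that(1), of \<gamma>]
      disc_value_exS(2)[OF assms that(1), of \<gamma>] disc_value_exS(2)[OF assms is_policy_up_policy, of \<gamma>]
    by (auto simp: exS_def)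
  then show ?thesis
    unfolding blackwell_optimal_def using is_policy_up_policy by (intro conjI exI[of _ 0]) auto
qed

lemma blackwell_optimal_exS_plays_up:
  assumes "T \<ge> 1" "blackwell_optimal exS exA exr (exP T) \<pi>"
  shows "\<pi> 1 0 = 1"
proof (rule ccontr)
  assume "\<pi> 1 0 \<noteq> 1"
  moreover obtain \<gamma>0 where "\<gamma>0 < 1" and optimal: "\<And>\<gamma> \<pi>' s. \<gamma>0 < \<gamma> \<Longrightarrow> \<gamma> < 1 \<Longrightarrow>
      is_policy exS exA \<pi>' \<Longrightarrow> s \<in> exS \<Longrightarrow>
      disc_value exS exA exr (exP T) \<gamma> \<pi>' s \<le> disc_value exS exA exr (exP T) \<gamma> \<pi> s"
    using assms(2) unfolding blackwell_optimal_def by blast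
  moreover have policy: "is_policy exS exA \<pi>"
    using assms(2) unfolding blackwell_optimal_def by blast
  define \<gamma> where "\<gamma> = (max \<gamma>0 0 + 1) / 2"
  have "\<gamma>0 < \<gamma>" "\<gamma> < 1" "0 \<le> \<gamma>"
    using \<open>\<gamma>0 < 1\<close> unfolding \<gamma>_def by auto
  ultimately show False
    using optimal[of \<gamma> up_policy 1] is_policy_up_policy is_policy_exS(4)[OF policy]
      up_policy_maximizes_disc_value_state1(2)[OF assms(1) policy, of \<gamma>]
    by (fastforce simp: exS_def)
qed

lemma span_bias_blackwell_optimal_exS:
  assumes "T \<ge> 1" "blackwell_optimal exS exA exr (exP T) \<pi>"
  shows "span exS (bias exS exA exr (exP T) \<pi>) = T / 2"
proof -
  have policy: "is_policy exS exA \<pi>"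
    using assms(2) unfolding blackwell_optimal_def by blast
  have "1 - stay_prob T \<pi> = 1 / T"
    using blackwell_optimal_exS_plays_up[OF assms] by (simp add: stay_prob_def)
  then show ?thesis
    using assms(1) blackwell_optimal_exS_plays_up[OF assms]
    by (simp add: span_exS bias_exS[OF assms(1) policy])
qed

lemma opt_gain_exS:
  assumes "T \<ge> 1" "s \<in> exS"
  shows "opt_gain exS exA exr (exP T) s = 1/2"
proof -
  have "opt_gain exS exA exr (exP T) s = (SUP \<pi>\<in>{\<pi>. is_policy exS exA \<pi>}. 1/2)"
    unfolding opt_gain_def using gain_exS[OF assms(1) _ assms(2)] by (intro SUP_cong) auto
  also have "\<dots> = 1/2"
    using is_policy_up_policy by (intro cSUP_const) auto
  finally show ?thesis .
qed

theorem theorem27: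
  fixes T :: real
  assumes "T \<ge> 1"
  shows "(\<exists>\<pi>. blackwell_optimal exS exA exr (exP T) \<pi>)
    \<and> (\<forall>\<pi>. blackwell_optimal exS exA exr (exP T) \<pi> \<longrightarrow>
          span exS (bias exS exA exr (exP T) \<pi>) = T / 2)
    \<and> (INF \<pi>\<in>{\<pi>. is_policy exS exA \<pi> \<and>
                  (\<forall>s\<in>exS. gain exS exA exr (exP T) \<pi> s = opt_gain exS exA exr (exP T) s)}.
          span exS (bias exS exA exr (exP T) \<pi>)) = 0"
proof (intro conjI allI impI)
  show "\<exists>\<pi>. blackwell_optimal exS exA exr (exP T) \<pi>"
    using blackwell_optimal_up_policy[OF assms] by blast
  show "span exS (bias exS exA exr (exP T) \<pi>) = T / 2"
    if "blackwell_optimal exS exA exr (exP T) \<pi>" for \<pi>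
    using span_bias_blackwell_optimal_exS[OF assms that] .
  have "down_policy \<in> {\<pi>. is_policy exS exA \<pi> \<and>
      (\<forall>s\<in>exS. gain exS exA exr (exP T) \<pi> s = opt_gain exS exA exr (exP T) s)}"
    using is_policy_down_policy by (simp add: gain_exS[OF assms] opt_gain_exS[OF assms])
  moreover have "span exS (bias exS exA exr (exP T) down_policy) = 0"
    by (simp add: span_exS bias_exS[OF assms is_policy_down_policy] down_policy_def)
  moreover have "0 \<le> span exS f" for f
    by (simp add: span_exS)
  ultimately show "(INF \<pi>\<in>{\<pi>. is_policy exS exA \<pi> \<and>
      (\<forall>s\<in>exS. gain exS exA exr (exP T) \<pi> s = opt_gain exS exA exr (exP T) s)}.
      span exS (bias exS exA exr (exP T) \<pi>)) = 0"
    by (intro cInf_eq_minimum) force+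
qed

end
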